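(* There is a universal constant $C>0$ such that the following holds. For any integers $n\ge 2$, $k\ge 2$ and any $\varepsilon\in(0,1)$, there is a map $F:\{0,1\}^n\to\mathcal{Q}_s$ with $s\le C\log n\cdot\log(1/\varepsilon)$ such that: if each player $\ell\in[k]$, holding input $x_\ell\in\{0,1\}^n$, sends the quantum state $F(x_\ell)$ to the referee, then for any indices $i,j\in[k]$ and any strings $y,z\in\{0,1\}^n$ known to the referee (and not necessarily to the players), the referee can compute $\mathrm{MEQ}_{k,n}(i,j,y,z)$ with error probability at most $\varepsilon$, for every choice of inputs $x_1,\dots,x_k$.
   Context: $[k]=\{1,\dots,k\}$. For $s\ge1$, $\mathcal{Q}_s$ denotes the set of $s$-qubit pure quantum states (unit vectors in $\mathbb{C}^{2^s}$). There are $k$ players, player $\ell$ holding a private input $x_\ell\in\{0,1\}^n$, and a referee who does not know the inputs. The modified equality query is $\mathrm{MEQ}_{k,n}(i,j,y,z)=1$ if $x_i\oplus y=x_j\oplus z$ and $0$ otherwise, where $\oplus$ is bitwise XOR. "The referee can compute the query with error at most $\varepsilon$" means the referee has a quantum procedure (quantum operations and measurements, depending on $i,j,y,z$) acting on the received states whose output equals $\mathrm{MEQ}_{k,n}(i,j,y,z)$ with probability at least $1-\varepsilon$. The players share no randomness and no entanglement. *)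

theory Defs
  imports Complex_Main "HOL-Library.FuncSet"
begin

definition bxor :: "bool list \<Rightarrow> bool list \<Rightarrow> bool list" where
  "bxor u v = map2 (\<noteq>) u v"

definition MEQ :: "(nat \<Rightarrow> bool list) \<Rightarrow> nat \<Rightarrow> nat \<Rightarrow> bool list \<Rightarrow> bool list \<Rightarrow> bool" where
  "MEQ x i j y z \<longleftrightarrow> bxor (x i) y = bxor (x j) z"

text \<open>An s-qubit pure state: a unit vector in C^(2^s), represented as a function
nat => complex supported on {..<2^s}.\<close>
definition qstate :: "nat \<Rightarrow> (nat \<Rightarrow> complex) \<Rightarrow> bool" where
  "qstate s q \<longleftrightarrow> (\<forall>a\<ge>2^s. q a = 0) \<and> (\<Sum>a<2^s. (cmod (q a))\<^sup>2) = 1"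

text \<open>Computational basis of the joint system of players 1..k, each holding s qubits:
basis vectors indexed by functions {1..k} -> {..<2^s}.\<close>
definition jbasis :: "nat \<Rightarrow> nat \<Rightarrow> (nat \<Rightarrow> nat) set" where
  "jbasis k s = PiE {1..k} (\<lambda>_. {..<2^s})"

text \<open>The joint (tensor product) state F(x_1) \<otimes> ... \<otimes> F(x_k).\<close>
definition jstate :: "nat \<Rightarrow> (bool list \<Rightarrow> nat \<Rightarrow> complex) \<Rightarrow> (nat \<Rightarrow> bool list)
    \<Rightarrow> (nat \<Rightarrow> nat) \<Rightarrow> complex" where
  "jstate k F x f = (\<Prod>l\<in>{1..k}. F (x l) (f l))"

definition qform :: "'b set \<Rightarrow> ('b \<Rightarrow> 'b \<Rightarrow> complex) \<Rightarrow> ('b \<Rightarrow> complex) \<Rightarrow> complex" where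
  "qform B M v = (\<Sum>f\<in>B. \<Sum>g\<in>B. cnj (v f) * M f g * v g)"

text \<open>A two-outcome measurement {M, I - M} is the most general quantum
procedure with binary output (quantum operations followed by a measurement).\<close>
definition effect :: "'b set \<Rightarrow> ('b \<Rightarrow> 'b \<Rightarrow> complex) \<Rightarrow> bool" where
  "effect B M \<longleftrightarrow> (\<forall>f\<in>B. \<forall>g\<in>B. M g f = cnj (M f g)) \<and>
     (\<forall>v. 0 \<le> Re (qform B M v) \<and> Re (qform B M v) \<le> (\<Sum>f\<in>B. (cmod (v f))\<^sup>2))"

definition prob_one :: "nat \<Rightarrow> nat \<Rightarrow> (bool list \<Rightarrow> nat \<Rightarrow> complex) \<Rightarrow> (nat \<Rightarrow> bool list)
    \<Rightarrow> ((nat \<Rightarrow> nat) \<Rightarrow> (nat \<Rightarrow> nat) \<Rightarrow> complex) \<Rightarrow> real" where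
  "prob_one k s F x M = Re (qform (jbasis k s) M (jstate k F x))"

definition referee_computes :: "nat \<Rightarrow> nat \<Rightarrow> nat \<Rightarrow> (bool list \<Rightarrow> nat \<Rightarrow> complex) \<Rightarrow> real
    \<Rightarrow> nat \<Rightarrow> nat \<Rightarrow> bool list \<Rightarrow> bool list \<Rightarrow> bool" where
  "referee_computes k n s F \<epsilon> i j y z \<longleftrightarrow>
     (\<exists>M. effect (jbasis k s) M \<and>
        (\<forall>x. (\<forall>l\<in>{1..k}. length (x l) = n) \<longrightarrow>
           (if MEQ x i j y z then prob_one k s F x M \<ge> 1 - \<epsilon>
            else 1 - prob_one k s F x M \<ge> 1 - \<epsilon>)))"

end

theory Submission
  imports Defs "HOL-Analysis.Harmonic_Numbers"
begin

text \<open>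
Fix a code \<open>c : [N] \<rightarrow> {0,1}^n\<close> with \<open>N = 4L = O(n)\<close> such that for every nonzero \<open>d\<close>
the fraction \<open>p\<close> of codewords with \<open>\<langle>c_m, d\<rangle> = 1\<close> lies in \<open>[1/4, 3/4]\<close>; it exists by
counting, since a random code is unbalanced at a fixed \<open>d\<close> with probability \<open>2^(-\<Omega>(L))\<close>.
Player \<open>\<ell>\<close> sends \<open>r = O(log 1/\<epsilon>)\<close> copies of the fingerprint
\<open>\<psi>_u = N^(-1/2) \<Sum>_m (-1)^\<langle>c_m, u\<rangle> |m\<rangle>\<close> of \<open>u = x_\<ell>\<close>, i.e. \<open>s = r log N\<close> qubits.
As \<open>\<psi>_(u \<oplus> y)\<close> is \<open>\<psi>_u\<close> with the diagonal phases of \<open>\<psi>_y\<close> applied, the referee turns the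
copies of players \<open>i\<close> and \<open>j\<close> into fingerprints of \<open>w = x_i \<oplus> y\<close> and \<open>w' = x_j \<oplus> z\<close>
and runs the swap test on each pair of copies, accepting iff all tests accept. This happens
with probability \<open>((1 + \<langle>\<psi>_w, \<psi>_w'\<rangle>^2)/2)^r = (p^2 + (1-p)^2)^r\<close> for \<open>d = w \<oplus> w'\<close>,
which is 1 if \<open>w = w'\<close> and at most \<open>(5/8)^r \<le> \<epsilon>\<close> otherwise. For \<open>\<epsilon> \<ge> 1/2\<close>, where the
size bound forces \<open>s\<close> towards 0, the referee simply guesses.
\<close>

definition bit_sign :: "bool \<Rightarrow> complex" where "bit_sign b = (if b then -1 else 1)"

lemma bit_sign_xor: "bit_sign (a \<noteq> b) = bit_sign a * bit_sign b"
  by (simp add: bit_sign_def)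

lemma norm_bit_sign [simp]: "cmod (bit_sign b) = 1"
  by (simp add: bit_sign_def)

lemma norm_bit_sign_add_sq: "(cmod (bit_sign a + bit_sign b))\<^sup>2 = (if a = b then 4 else 0)"
  by (cases a; cases b) (simp_all add: bit_sign_def)

definition gf2_inner :: "bool list \<Rightarrow> bool list \<Rightarrow> bool" where
  "gf2_inner v d = odd (card {q. q < length d \<and> v!q \<and> d!q})"

lemma odd_card_symdiff:
  assumes "finite A" "finite B"
  shows "odd (card ((A-B) \<union> (B-A))) = (odd (card A) \<noteq> odd (card B))"
proof -
  have "card ((A-B) \<union> (B-A)) = card (A-B) + card (B-A)"
    using assms by (intro card_Un_disjoint) auto
  moreover have "card A = card (A-B) + card (A \<inter> B)" "card B = card (B-A) + card (A \<inter> B)"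
    using assms by (simp_all add: card_Diff_subset_Int card_mono Int_commute)
  ultimately show ?thesis by auto
qed

lemma length_bxor [simp]: "length (bxor u v) = min (length u) (length v)"
  by (simp add: bxor_def)

lemma nth_bxor: "q < length u \<Longrightarrow> q < length v \<Longrightarrow> bxor u v ! q = (u!q \<noteq> v!q)"
  by (simp add: bxor_def)

lemma gf2_inner_bxor:
  assumes "length w = length w'"
  shows "gf2_inner v (bxor w w') = (gf2_inner v w \<noteq> gf2_inner v w')"
proof -
  let ?A = "{q. q < length w \<and> v!q \<and> w!q}" and ?B = "{q. q < length w' \<and> v!q \<and> w'!q}"
  have "{q. q < length (bxor w w') \<and> v!q \<and> bxor w w' ! q} = (?A - ?B) \<union> (?B - ?A)"
    using assms by (auto simp: nth_bxor)
  then show ?thesis unfolding gf2_inner_def using odd_card_symdiff[of ?A ?B] by simp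
qed

lemma gf2_inner_replicate_False [simp]: "gf2_inner v (replicate n False) = False"
proof -
  have empty: "{q. q < n \<and> v!q \<and> replicate n False ! q} = {}" by auto
  show ?thesis unfolding gf2_inner_def length_replicate empty by simp
qed

lemma gf2_inner_flip:
  assumes "p < length d" "d!p" "length v = length d"
  shows "gf2_inner (v[p := \<not> v!p]) d = (\<not> gf2_inner v d)"
proof -
  let ?S = "{q. q < length d \<and> v!q \<and> d!q}"
  let ?S' = "{q. q < length d \<and> v[p := \<not> v!p]!q \<and> d!q}"
  have fin: "finite ?S" by simp
  show ?thesis
  proof (cases "v!p")
    case True
    then have "?S' = ?S - {p}" "p \<in> ?S" using assms by (auto simp: nth_list_update)
    then have "card ?S = Suc (card ?S')" using card_Suc_Diff1[OF fin] by simp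
    then show ?thesis unfolding gf2_inner_def by simp
  next
    case False
    then have "?S' = insert p ?S" "p \<notin> ?S" using assms by (auto simp: nth_list_update)
    then have "card ?S' = card ?S + 1" using fin by simp
    then show ?thesis unfolding gf2_inner_def by simp
  qed
qed

text \<open>A nonzero \<open>d\<close> splits \<open>{0,1}^n\<close> into halves: flipping a bit in the support of \<open>d\<close> is a
bijection between the two sides.\<close>
lemma card_gf2_inner_half:
  assumes "d \<noteq> replicate n False" "length d = n"
  defines "V \<equiv> {v::bool list. length v = n}"
  shows "2 * card {v\<in>V. gf2_inner v d} = 2^n" and "2 * card (V - {v\<in>V. gf2_inner v d}) = 2^n"
proof -
  obtain p where p: "p < n" "d!p" using assms(1,2)
    by (metis (full_types) in_set_conv_nth replicate_eqI)
  let ?W = "{v\<in>V. gf2_inner v d}"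
  let ?flip = "\<lambda>v::bool list. v[p := \<not> v!p]"
  have cV: "card V = 2^n"
    using card_lists_length_eq[of "UNIV::bool set" n] unfolding V_def by simp
  have fV: "finite V" unfolding V_def using finite_lists_length_eq[of "UNIV::bool set" n] by simp
  have "bij_betw ?flip ?W (V - ?W)"
    by (rule bij_betw_byWitness[of _ ?flip]) (use p assms(2) in \<open>auto simp: V_def gf2_inner_flip\<close>)
  then have e: "card ?W = card (V - ?W)" by (rule bij_betw_same_card)
  have "card ?W \<le> card V" using fV by (intro card_mono) auto
  then have "card V = card ?W + card (V - ?W)"
    using fV by (simp add: card_Diff_subset)
  then show "2 * card ?W = 2^n" "2 * card (V - ?W) = 2^n" using e cV by linarith+
qed

lemma bxor_eq_replicate_False_iff:
  assumes "length w1 = n" "length w2 = n"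
  shows "bxor w1 w2 = replicate n False \<longleftrightarrow> w1 = w2"
proof
  assume "bxor w1 w2 = replicate n False"
  then have "\<forall>q<n. bxor w1 w2 ! q = False" by simp
  then show "w1 = w2" using assms by (intro nth_equalityI) (auto simp: nth_bxor)
next
  assume "w1 = w2" then show "bxor w1 w2 = replicate n False"
    using assms by (intro nth_equalityI) (auto simp: nth_bxor)
qed

lemma bxor_left_cancel:
  assumes "length a = length y" "length a = length z" "bxor a y = bxor a z"
  shows "y = z"
proof (rule nth_equalityI)
  show "length y = length z" using assms by simp
  fix q assume "q < length y"
  then have "(a!q \<noteq> y!q) = (a!q \<noteq> z!q)"
    using assms nth_bxor[of q a y] nth_bxor[of q a z] by simp
  then show "y ! q = z ! q" by auto
qed

definition balanced_at :: "nat \<Rightarrow> (nat \<Rightarrow> bool list) \<Rightarrow> bool list \<Rightarrow> bool" where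
  "balanced_at L cw d \<longleftrightarrow>
     L \<le> card {m. m < 4*L \<and> gf2_inner (cw m) d} \<and> card {m. m < 4*L \<and> gf2_inner (cw m) d} \<le> 3*L"

definition balanced_code :: "nat \<Rightarrow> nat \<Rightarrow> (nat \<Rightarrow> bool list) \<Rightarrow> bool" where
  "balanced_code n L cw \<longleftrightarrow> (\<forall>d. length d = n \<and> d \<noteq> replicate n False \<longrightarrow> balanced_at L cw d)"

lemma card_lessThan_split: "card {m. m < M \<and> P m} + card {m. m < M \<and> \<not> P m} = M"
proof -
  have "{..<M} = {m. m < M \<and> P m} \<union> {m. m < M \<and> \<not> P m}" by auto
  then have "card {..<M} = card ({m. m < M \<and> P m} \<union> {m. m < M \<and> \<not> P m})" by simp
  also have "\<dots> = card {m. m < M \<and> P m} + card {m. m < M \<and> \<not> P m}"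
    by (intro card_Un_disjoint) auto
  finally show ?thesis by simp
qed

text \<open>Exponential Markov inequality: weighting each hit by 3, the total weight
\<open>\<Sum>_g 3^hits(g)\<close> factorises as \<open>(|V| + 2|U|)^M\<close>.\<close>
lemma card_PiE_many_hits:
  fixes V U :: "'a set"
  assumes "finite V" "U \<subseteq> V"
  shows "card {g\<in>PiE {..<M} (\<lambda>_. V). T \<le> card {m. m<M \<and> g m \<in> U}} * 3^T \<le> (card V + 2*card U)^M"
proof -
  let ?A = "PiE {..<M} (\<lambda>_. V)"
  let ?hits = "\<lambda>g. card {m. m<M \<and> g m \<in> U}"
  have fA: "finite ?A" using assms by (simp add: finite_PiE)
  have pow_hits: "(3::nat)^(?hits g) = (\<Prod>m<M. if g m \<in> U then 3 else 1)" for g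
  proof -
    have "{..<M} \<inter> {m. g m \<in> U} = {m. m<M \<and> g m \<in> U}" by auto
    then show ?thesis by (simp add: prod.If_cases)
  qed
  have weight_V: "(\<Sum>v\<in>V. if v \<in> U then 3 else 1) = card V + 2 * card U"
  proof -
    have "(\<Sum>v\<in>V. if v \<in> U then 3 else (1::nat)) = 3 * card (V \<inter> U) + card (V \<inter> - U)"
      using assms by (simp add: sum.If_cases)
    moreover have "V \<inter> U = U" using assms by auto
    moreover have "card (V \<inter> - U) = card V - card U"
      using assms by (metis Diff_eq card_Diff_subset finite_subset)
    moreover have "card U \<le> card V" using assms by (simp add: card_mono)
    ultimately show ?thesis by simp
  qed
  have "(\<Sum>g\<in>?A. (3::nat)^(?hits g)) = (\<Prod>m<M. \<Sum>v\<in>V. if v \<in> U then 3 else 1)"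
    unfolding pow_hits using assms by (subst prod_sum_PiE) auto
  also have "\<dots> = (card V + 2*card U)^M" by (simp add: weight_V)
  finally have total: "(\<Sum>g\<in>?A. (3::nat)^(?hits g)) = (card V + 2*card U)^M" .
  let ?many = "{g\<in>?A. T \<le> ?hits g}"
  have "card ?many * 3^T = (\<Sum>g\<in>?many. (3::nat)^T)" by simp
  also have "\<dots> \<le> (\<Sum>g\<in>?many. 3^(?hits g))" by (intro sum_mono power_increasing) auto
  also have "\<dots> \<le> (\<Sum>g\<in>?A. 3^(?hits g))" using fA by (intro sum_mono2) auto
  finally show ?thesis using total by simp
qed

lemma two_pow_mult_16_pow_le_27_pow: assumes "2*n \<le> (L::nat)" shows "2^n * 16^L \<le> (27::nat)^L"
proof -
  have a: "(16::nat)^(L-2*n) \<le> 27^(L-2*n)" by (rule power_mono) auto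
  have "(2::nat)^n * 16^(2*n) = (2*256)^n" by (simp only: power_mult power_mult_distrib) simp
  also have "\<dots> \<le> 729^n" by (rule power_mono) auto
  also have "\<dots> = 27^(2*n)" by (simp add: power_mult)
  finally have b: "(2::nat)^n * 16^(2*n) \<le> 27^(2*n)" .
  have "(2::nat)^n * 16^L = 16^(L-2*n) * (2^n * 16^(2*n))"
    using assms by (simp add: power_add[symmetric] mult_ac)
  also have "\<dots> \<le> 27^(L-2*n) * 27^(2*n)" using a b by (rule mult_le_mono)
  also have "\<dots> = 27^L" using assms by (simp add: power_add[symmetric])
  finally show ?thesis .
qed

lemma card_codes_unbalanced_at:
  fixes n L :: nat
  assumes "length d = n" "d \<noteq> replicate n False"
  defines "A \<equiv> PiE {..<4*L} (\<lambda>_. {v::bool list. length v = n})"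
  shows "card {cw\<in>A. \<not> balanced_at L cw d} * 3^(3*L+1) \<le> 2 * 2^(n*(4*L)) * 16^L"
proof -
  define V where "V = {v::bool list. length v = n}"
  define W where "W = {v\<in>V. gf2_inner v d}"
  define many where "many U = {cw\<in>A. 3*L+1 \<le> card {m. m<4*L \<and> cw m \<in> U}}" for U
  have cV: "card V = 2^n"
    using card_lists_length_eq[of "UNIV::bool set" n] unfolding V_def by simp
  have fV: "finite V" unfolding V_def using finite_lists_length_eq[of "UNIV::bool set" n] by simp
  have many_le: "card (many U) * 3^(3*L+1) \<le> 2^(n*(4*L)) * 16^L" if "U \<subseteq> V" "2 * card U = 2^n" for U
  proof -
    have "card (many U) * 3^(3*L+1) \<le> (card V + 2 * card U)^(4*L)"
      unfolding many_def A_def V_def[symmetric] by (rule card_PiE_many_hits[OF fV that(1)])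
    also have "card V + 2 * card U = 2 * 2^n" using that cV by simp
    also have "(2 * 2^n)^(4*L) = 2^(4*L) * (2::nat)^(n*(4*L))" by (simp add: power_mult_distrib power_mult)
    also have "(2::nat)^(4*L) = 16^L" by (simp add: power_mult)
    finally show ?thesis by (simp add: mult.commute)
  qed
  have unbalanced_sub: "{cw\<in>A. \<not> balanced_at L cw d} \<subseteq> many W \<union> many (V - W)"
  proof
    fix cw assume cw: "cw \<in> {cw\<in>A. \<not> balanced_at L cw d}"
    then have "m < 4*L \<Longrightarrow> cw m \<in> V" for m unfolding A_def V_def by auto
    then have hits: "{m. m < 4*L \<and> cw m \<in> W} = {m. m < 4*L \<and> gf2_inner (cw m) d}"
      "{m. m < 4*L \<and> cw m \<in> V - W} = {m. m < 4*L \<and> \<not> gf2_inner (cw m) d}"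
      unfolding W_def by auto
    let ?h = "card {m. m < 4*L \<and> gf2_inner (cw m) d}"
    have "?h + card {m. m < 4*L \<and> \<not> gf2_inner (cw m) d} = 4*L" by (rule card_lessThan_split)
    moreover have "\<not> (L \<le> ?h \<and> ?h \<le> 3*L)" using cw by (simp add: balanced_at_def)
    ultimately have "3*L+1 \<le> ?h \<or> 3*L+1 \<le> card {m. m < 4*L \<and> \<not> gf2_inner (cw m) d}"
      by linarith
    then have "3*L+1 \<le> card {m. m < 4*L \<and> cw m \<in> W} \<or> 3*L+1 \<le> card {m. m < 4*L \<and> cw m \<in> V - W}"
      unfolding hits .
    then show "cw \<in> many W \<union> many (V - W)" using cw unfolding many_def by blast
  qed
  have "finite A" unfolding A_def using fV[unfolded V_def] by (simp add: finite_PiE)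
  then have "finite (many W \<union> many (V - W))" unfolding many_def by simp
  then have "card {cw\<in>A. \<not> balanced_at L cw d} \<le> card (many W \<union> many (V - W))"
    by (rule card_mono[OF _ unbalanced_sub])
  also have "\<dots> \<le> card (many W) + card (many (V - W))" by (rule card_Un_le)
  finally have "card {cw\<in>A. \<not> balanced_at L cw d} * 3^(3*L+1)
      \<le> card (many W) * 3^(3*L+1) + card (many (V - W)) * 3^(3*L+1)"
    unfolding add_mult_distrib[symmetric] by (rule mult_le_mono1)
  also have "\<dots> \<le> 2^(n*(4*L)) * 16^L + 2^(n*(4*L)) * 16^L"
    using card_gf2_inner_half[OF assms(2,1)] unfolding W_def V_def
    by (intro add_mono many_le) (auto simp: V_def)
  finally show ?thesis by simp
qed

text \<open>Union bound over the \<open>2^n\<close> directions \<open>d\<close>: the unbalanced codes form at most a fraction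
\<open>2^n \<cdot> 2 \<cdot> 16^L / 3^(3L+1) \<le> 2/3\<close> of all codes, as \<open>2^n 16^L \<le> 27^L\<close> for \<open>L \<ge> 2n\<close>.\<close>
lemma balanced_code_exists:
  assumes "2*n \<le> L"
  shows "\<exists>cw. balanced_code n L cw"
proof -
  define V where "V = {v::bool list. length v = n}"
  define A where "A = PiE {..<4*L} (\<lambda>_. V)"
  define D where "D = V - {replicate n False}"
  define Bad where "Bad = (\<Union>d\<in>D. {cw\<in>A. \<not> balanced_at L cw d})"
  have cV: "card V = 2^n"
    using card_lists_length_eq[of "UNIV::bool set" n] unfolding V_def by simp
  have fV: "finite V" unfolding V_def using finite_lists_length_eq[of "UNIV::bool set" n] by simp
  have cA: "card A = 2^(n*(4*L))" unfolding A_def using fV by (simp add: card_PiE cV power_mult)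
  have fD: "finite D" and cD: "card D \<le> 2^n" unfolding D_def using fV cV
    by (auto intro: order.trans[OF card_mono[of V]])
  have "card Bad * 3^(3*L+1) \<le> (\<Sum>d\<in>D. card {cw\<in>A. \<not> balanced_at L cw d}) * 3^(3*L+1)"
    unfolding Bad_def by (intro mult_le_mono1 card_UN_le[OF fD])
  also have "\<dots> \<le> (\<Sum>d\<in>D. 2 * 2^(n*(4*L)) * 16^L)"
    unfolding sum_distrib_right A_def V_def
  proof (rule sum_mono)
    fix d assume "d \<in> D"
    then show "card {cw\<in>{..<4*L} \<rightarrow>\<^sub>E {v. length v = n}. \<not> balanced_at L cw d} * 3^(3*L+1)
        \<le> 2 * 2^(n*(4*L)) * 16^L"
      by (intro card_codes_unbalanced_at) (auto simp: D_def V_def)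
  qed
  also have "\<dots> \<le> 2 * 2^(n*(4*L)) * (2^n * 16^L)"
    using cD by (simp add: mult_ac)
  also have "\<dots> \<le> 2 * 2^(n*(4*L)) * 27^L" using two_pow_mult_16_pow_le_27_pow[OF assms] by simp
  also have "\<dots> < card A * 3^(3*L+1)" by (simp add: cA power_mult)
  finally have "card Bad < card A" by (simp only: mult_less_cancel2)
  moreover have "Bad \<subseteq> A" unfolding Bad_def by auto
  ultimately have "A - Bad \<noteq> {}" by auto
  then obtain cw where "cw \<in> A" "cw \<notin> Bad" by blast
  then have "balanced_at L cw d" if "length d = n" "d \<noteq> replicate n False" for d
    using that unfolding Bad_def D_def V_def by auto
  then show ?thesis unfolding balanced_code_def by blast
qed

definition agree :: "(nat \<Rightarrow> bool list) \<Rightarrow> bool list \<Rightarrow> nat \<Rightarrow> nat \<Rightarrow> real" where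
  "agree cw d m m' = (if gf2_inner (cw m) d = gf2_inner (cw m') d then 1 else 0)"

lemma norm_bit_sign_swap_sq:
  assumes "length w = length w'"
  shows "(cmod (bit_sign (gf2_inner (cw b) w) * bit_sign (gf2_inner (cw a) w')
                + bit_sign (gf2_inner (cw a) w) * bit_sign (gf2_inner (cw b) w')))\<^sup>2
         = 4 * agree cw (bxor w w') a b"
proof -
  have "bit_sign (gf2_inner (cw b) w) * bit_sign (gf2_inner (cw a) w')
        + bit_sign (gf2_inner (cw a) w) * bit_sign (gf2_inner (cw b) w')
      = bit_sign (gf2_inner (cw b) w \<noteq> gf2_inner (cw a) w')
        + bit_sign (gf2_inner (cw a) w \<noteq> gf2_inner (cw b) w')"
    by (simp only: bit_sign_xor)
  then show ?thesis using assms by (simp only: norm_bit_sign_add_sq agree_def gf2_inner_bxor) auto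
qed

lemma agree_sum_replicate_False: "(\<Sum>m<N. \<Sum>m'<N. agree cw (replicate n False) m m') = real N ^ 2"
  by (simp add: agree_def power2_eq_square)

lemma agree_sum_eq:
  fixes N :: nat and cw :: "nat \<Rightarrow> bool list" and d :: "bool list"
  defines "p \<equiv> card {m. m < N \<and> gf2_inner (cw m) d}"
  shows "(\<Sum>m<N. \<Sum>m'<N. agree cw d m m') = real p ^ 2 + real (N - p) ^ 2"
proof -
  let ?P = "\<lambda>m. gf2_inner (cw m) d"
  have q: "card {m. m < N \<and> \<not> ?P m} = N - p"
    using card_lessThan_split[of N ?P] unfolding p_def by simp
  have inner: "(\<Sum>m'<N. agree cw d m m') = (if ?P m then real p else real (N - p))" for m
  proof -
    have "(\<Sum>m'<N. agree cw d m m') = real (card ({..<N} \<inter> {m'. ?P m = ?P m'}))"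
      unfolding agree_def by (simp add: sum.If_cases)
    also have "{..<N} \<inter> {m'. ?P m = ?P m'}
        = (if ?P m then {m. m < N \<and> ?P m} else {m. m < N \<and> \<not> ?P m})"
      by auto
    finally show ?thesis using q unfolding p_def by (auto split: if_splits)
  qed
  have "(\<Sum>m<N. \<Sum>m'<N. agree cw d m m') = (\<Sum>m<N. if ?P m then real p else real (N - p))"
    by (simp add: inner)
  also have "\<dots> = real p * real (card ({..<N} \<inter> {m. ?P m}))
      + real (N-p) * real (card ({..<N} \<inter> - {m. ?P m}))"
    by (simp add: sum.If_cases)
  also have "{..<N} \<inter> {m. ?P m} = {m. m < N \<and> ?P m}" by auto
  also have "{..<N} \<inter> - {m. ?P m} = {m. m < N \<and> \<not> ?P m}" by auto
  finally show ?thesis using q unfolding p_def by (simp add: power2_eq_square)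
qed

text \<open>\<open>p^2 + (1 - p)^2 \<le> 5/8\<close> for \<open>p \<in> [1/4, 3/4]\<close>, since \<open>(p - 1/4)(3/4 - p) \<ge> 0\<close>.\<close>
lemma agree_sum_le_of_balanced:
  assumes "balanced_at L cw d"
  shows "(\<Sum>m<4*L. \<Sum>m'<4*L. agree cw d m m') / (real (4*L))^2 \<le> 5/8"
proof -
  define p where "p = card {m. m < 4*L \<and> gf2_inner (cw m) d}"
  have lp: "real L \<le> real p" "real p \<le> 3 * real L"
    using assms unfolding p_def balanced_at_def by auto
  have np: "real (4*L - p) = 4 * real L - real p"
    using assms unfolding p_def balanced_at_def by (simp add: of_nat_diff)
  have "0 \<le> (real p - real L) * (3 * real L - real p)" using lp by (intro mult_nonneg_nonneg) auto
  then have "real p ^ 2 + (4 * real L - real p) ^ 2 \<le> 5/8 * (4 * real L)^2"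
    by (simp add: power2_eq_square algebra_simps)
  then show ?thesis
    unfolding agree_sum_eq p_def[symmetric] np by (cases "L = 0") (simp_all add: divide_le_eq)
qed

definition digit :: "nat \<Rightarrow> nat \<Rightarrow> nat \<Rightarrow> nat" where "digit N c a = a div N^c mod N"

lemma digit_0: "digit N 0 a = a mod N"
  by (simp add: digit_def)

lemma digit_Suc: "digit N (Suc c) a = digit N c (a div N)"
  by (simp add: digit_def div_mult2_eq mult.commute)

lemma digit_less: "0 < N \<Longrightarrow> digit N c a < N"
  by (simp add: digit_def)

lemma add_mult_less_mult: "m < (N::nat) \<Longrightarrow> q < M \<Longrightarrow> m + N*q < N*M"
proof -
  assume a: "m < N" "q < M"
  then have "m + N*q < N*(q+1)" by simp
  also have "\<dots> \<le> N*M" using a by (intro mult_le_mono2) auto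
  finally show ?thesis .
qed

lemma sum_lessThan_mult:
  fixes f :: "nat \<Rightarrow> 'a::comm_monoid_add"
  assumes "0 < N"
  shows "(\<Sum>a<N*M. f a) = (\<Sum>m<N. \<Sum>q<M. f (m + N*q))"
proof -
  have "(\<Sum>a<N*M. f a) = (\<Sum>(m,q)\<in>{..<N}\<times>{..<M}. f (m + N*q))"
    by (rule sum.reindex_bij_witness[of _ "\<lambda>(m,q). m + N*q" "\<lambda>a. (a mod N, a div N)"])
       (use assms in \<open>auto simp: split: prod.splits intro: add_mult_less_mult\<close>,
        metis less_mult_imp_div_less mult.commute)
  also have "\<dots> = (\<Sum>m<N. \<Sum>q<M. f (m + N*q))" by (simp add: sum.cartesian_product)
  finally show ?thesis .
qed

lemma sum_sum_prod_digits:
  fixes G :: "nat \<Rightarrow> nat \<Rightarrow> 'a::comm_semiring_1"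
  assumes "0 < N"
  shows "(\<Sum>a<N^r. \<Sum>b<N^r. \<Prod>c<r. G (digit N c a) (digit N c b)) = (\<Sum>m<N. \<Sum>m'<N. G m m')^r"
proof (induction r)
  case 0 then show ?case by simp
next
  case (Suc r)
  let ?P = "\<lambda>a b. \<Prod>c<r. G (digit N c a) (digit N c b)"
  have pr: "(\<Prod>c<Suc r. G (digit N c a) (digit N c b)) = G (a mod N) (b mod N) * ?P (a div N) (b div N)" for a b
    unfolding prod.lessThan_Suc_shift by (simp add: digit_0 digit_Suc)
  have "(\<Sum>a<N^Suc r. \<Sum>b<N^Suc r. \<Prod>c<Suc r. G (digit N c a) (digit N c b))
      = (\<Sum>m<N. \<Sum>q<N^r. \<Sum>m'<N. \<Sum>q'<N^r. G m m' * ?P q q')"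
  proof -
    have "(\<Sum>a<N^Suc r. \<Sum>b<N^Suc r. \<Prod>c<Suc r. G (digit N c a) (digit N c b))
      = (\<Sum>m<N. \<Sum>q<N^r. \<Sum>m'<N. \<Sum>q'<N^r. \<Prod>c<Suc r. G (digit N c (m+N*q)) (digit N c (m'+N*q')))"
      by (simp only: power_Suc sum_lessThan_mult[OF assms])
    also have "\<dots> = (\<Sum>m<N. \<Sum>q<N^r. \<Sum>m'<N. \<Sum>q'<N^r. G m m' * ?P q q')"
      by (intro sum.cong refl) (simp only: pr, simp)
    finally show ?thesis .
  qed
  also have "\<dots> = (\<Sum>m<N. \<Sum>m'<N. \<Sum>q<N^r. \<Sum>q'<N^r. G m m' * ?P q q')"
    by (rule sum.cong[OF refl], rule sum.swap)
  also have "\<dots> = (\<Sum>m<N. \<Sum>m'<N. G m m' * (\<Sum>q<N^r. \<Sum>q'<N^r. ?P q q'))"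
    by (simp add: sum_distrib_left)
  also have "\<dots> = (\<Sum>m<N. \<Sum>m'<N. G m m') * (\<Sum>q<N^r. \<Sum>q'<N^r. ?P q q')"
    by (simp add: sum_distrib_right)
  finally show ?case using Suc by simp
qed

lemma digits_of_sum:
  assumes "0 < N" "\<forall>c<r. e c < N"
  shows "(\<Sum>c<r. e c * N^c) < N^r \<and> (\<forall>c<r. digit N c (\<Sum>c'<r. e c' * N^c') = e c)"
  using assms(2)
proof (induction r arbitrary: e)
  case 0 then show ?case by simp
next
  case (Suc r)
  let ?X = "\<Sum>c<r. e (Suc c) * N^c"
  have IH: "?X < N^r \<and> (\<forall>c<r. digit N c ?X = e (Suc c))" using Suc by auto
  have eq: "(\<Sum>c<Suc r. e c * N^c) = e 0 + N * ?X"
    unfolding sum.lessThan_Suc_shift by (simp add: sum_distrib_left mult.assoc mult.left_commute)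
  have e0: "e 0 < N" using Suc by auto
  have "e 0 + N * ?X < N * (?X + 1)" using e0 by simp
  also have "\<dots> \<le> N * N^r" using IH by (intro mult_le_mono2) auto
  finally have b: "e 0 + N * ?X < N^Suc r" by simp
  have d: "digit N c (e 0 + N * ?X) = e c" if "c < Suc r" for c
  proof (cases c)
    case 0 then show ?thesis using e0 by (simp add: digit_0)
  next
    case (Suc c') then show ?thesis using IH that e0 assms(1) by (simp add: digit_Suc)
  qed
  show ?case using b d eq by simp
qed

lemma sum_digits_eq_mod:
  "(\<Sum>c<r. digit N c a * N^c) = a mod N^r"
proof (induction r)
  case 0 then show ?case by simp
next
  case (Suc r)
  have "a mod (N^r * N) = N^r * (a div N^r mod N) + a mod N^r" by (rule mod_mult2_eq)
  then show ?case using Suc by (simp add: digit_def mult.commute)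
qed

definition mix_digits :: "nat \<Rightarrow> nat \<Rightarrow> nat set \<Rightarrow> nat \<Rightarrow> nat \<Rightarrow> nat" where
  "mix_digits N r \<tau> a b = (\<Sum>c<r. (if c \<in> \<tau> then digit N c b else digit N c a) * N^c)"

lemma mix_digits_less: "0 < N \<Longrightarrow> mix_digits N r \<tau> a b < N^r"
  using digits_of_sum[of N r "\<lambda>c. (if c \<in> \<tau> then digit N c b else digit N c a)"]
  by (simp add: mix_digits_def digit_less)

lemma digit_mix_digits:
  "0 < N \<Longrightarrow> c < r \<Longrightarrow> digit N c (mix_digits N r \<tau> a b) = (if c \<in> \<tau> then digit N c b else digit N c a)"
  using digits_of_sum[of N r "\<lambda>c. (if c \<in> \<tau> then digit N c b else digit N c a)"]
  by (simp add: mix_digits_def digit_less)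

lemma mix_digits_involution:
  assumes "0 < N" "a < N^r"
  shows "mix_digits N r \<tau> (mix_digits N r \<tau> a b) (mix_digits N r \<tau> b a) = a"
proof -
  have "mix_digits N r \<tau> (mix_digits N r \<tau> a b) (mix_digits N r \<tau> b a) = (\<Sum>c<r. digit N c a * N^c)"
    unfolding mix_digits_def[of N r \<tau> "mix_digits N r \<tau> a b"]
    by (intro sum.cong refl) (simp add: digit_mix_digits[OF assms(1)])
  also have "\<dots> = a" using assms by (simp add: sum_digits_eq_mod)
  finally show ?thesis .
qed

lemma sum_PiE_insert:
  fixes f :: "('a \<Rightarrow> 'b) \<Rightarrow> 'c::comm_monoid_add"
  assumes "x \<notin> A"
  shows "(\<Sum>g\<in>PiE (insert x A) B. f g) = (\<Sum>y\<in>B x. \<Sum>g\<in>PiE A B. f (g(x := y)))"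
proof -
  have "(\<Sum>g\<in>PiE (insert x A) B. f g) = (\<Sum>(y,g)\<in>B x \<times> PiE A B. f (g(x := y)))"
    using assms
    by (intro sum.reindex_bij_witness[of _ "\<lambda>(y,g). g(x := y)" "\<lambda>g. (g x, g(x := undefined))"])
       (auto simp: PiE_def extensional_def)
  also have "\<dots> = (\<Sum>y\<in>B x. \<Sum>g\<in>PiE A B. f (g(x := y)))"
    by (subst sum.cartesian_product) auto
  finally show ?thesis .
qed

lemma sum_PiE_pair:
  fixes H :: "'b \<Rightarrow> 'b \<Rightarrow> 'c::comm_semiring_1"
  assumes "finite I" "i \<in> I" "j \<in> I" "i \<noteq> j"
  shows "(\<Sum>h\<in>PiE I (\<lambda>_. S). H (h i) (h j)) = of_nat (card S ^ (card I - 2)) * (\<Sum>a\<in>S. \<Sum>b\<in>S. H a b)"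
proof -
  define J where "J = I - {i,j}"
  have I: "I = insert i (insert j J)" using assms unfolding J_def by auto
  have nJ: "i \<notin> insert j J" "j \<notin> J" using assms unfolding J_def by auto
  have cJ: "card J = card I - 2" using assms unfolding J_def by (simp add: card_Diff_subset)
  have "(\<Sum>h\<in>PiE I (\<lambda>_. S). H (h i) (h j)) = (\<Sum>a\<in>S. \<Sum>g\<in>PiE (insert j J) (\<lambda>_. S). H a (g j))"
    unfolding I using nJ assms(4) by (subst sum_PiE_insert) auto
  also have "\<dots> = (\<Sum>a\<in>S. \<Sum>b\<in>S. \<Sum>g\<in>PiE J (\<lambda>_. S). H a b)"
    using nJ by (intro sum.cong refl) (subst sum_PiE_insert, auto)
  also have "\<dots> = (\<Sum>a\<in>S. \<Sum>b\<in>S. H a b * of_nat (card (PiE J (\<lambda>_. S))))"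
    by (simp add: mult.commute)
  also have "\<dots> = (\<Sum>a\<in>S. \<Sum>b\<in>S. H a b) * of_nat (card (PiE J (\<lambda>_. S)))"
    by (simp only: sum_distrib_right)
  also have "card (PiE J (\<lambda>_. S)) = card S ^ (card I - 2)"
    using assms(1) unfolding J_def by (simp add: card_PiE cJ[unfolded J_def])
  finally show ?thesis by (simp add: mult.commute)
qed

lemma finite_jbasis [simp]: "finite (jbasis k s)"
  unfolding jbasis_def by (simp add: finite_PiE)

lemma jstate_norm:
  assumes "\<forall>l\<in>{1..k}. qstate s (F (x l))"
  shows "(\<Sum>h\<in>jbasis k s. (cmod (jstate k F x h))\<^sup>2) = 1"
proof -
  have "(\<Sum>h\<in>jbasis k s. (cmod (jstate k F x h))\<^sup>2) = (\<Sum>h\<in>jbasis k s. \<Prod>l\<in>{1..k}. (cmod (F (x l) (h l)))\<^sup>2)"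
    unfolding jstate_def by (simp add: prod_norm[symmetric] prod_power_distrib)
  also have "\<dots> = (\<Prod>l\<in>{1..k}. \<Sum>a<2^s. (cmod (F (x l) a))\<^sup>2)"
    unfolding jbasis_def by (subst prod_sum_PiE) auto
  also have "\<dots> = 1" using assms by (simp add: qstate_def)
  finally show ?thesis .
qed

lemma cnj_mult_self: "cnj z * z = complex_of_real ((cmod z)\<^sup>2)"
  using complex_norm_square[of z] by (simp add: mult.commute)

lemma qform_scalar:
  assumes "finite B"
  shows "qform B (\<lambda>f g. if f = g then complex_of_real c else 0) v
    = complex_of_real (c * (\<Sum>f\<in>B. (cmod (v f))\<^sup>2))"
proof -
  have "qform B (\<lambda>f g. if f = g then complex_of_real c else 0) v = (\<Sum>f\<in>B. cnj (v f) * c * v f)"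
    unfolding qform_def using assms by (intro sum.cong refl) (simp add: if_distrib if_distribR sum.delta cong: if_cong)
  also have "\<dots> = (\<Sum>f\<in>B. complex_of_real (c * (cmod (v f))\<^sup>2))"
  proof (intro sum.cong refl)
    fix f
    have "cnj (v f) * c * v f = complex_of_real c * (cnj (v f) * v f)" by (simp add: mult_ac)
    also have "\<dots> = complex_of_real c * complex_of_real ((cmod (v f))\<^sup>2)" by (simp only: cnj_mult_self)
    also have "\<dots> = complex_of_real (c * (cmod (v f))\<^sup>2)" by simp
    finally show "cnj (v f) * c * v f = complex_of_real (c * (cmod (v f))\<^sup>2)" .
  qed
  finally show ?thesis by (simp add: sum_distrib_left)
qed

lemma effect_scalar:
  assumes "0 \<le> c" "c \<le> 1" "finite B"
  shows "effect B (\<lambda>f g. if f = g then complex_of_real c else 0)"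
  unfolding effect_def qform_scalar[OF assms(3)]
  using assms by (auto intro!: mult_nonneg_nonneg sum_nonneg mult_left_le_one_le)

lemma qform_gram:
  assumes "finite B"
  shows "qform B (\<lambda>f g. \<Sum>h\<in>B. cnj (T h f) * T h g) v
    = complex_of_real (\<Sum>h\<in>B. (cmod (\<Sum>g\<in>B. T h g * v g))\<^sup>2)"
proof -
  let ?X = "\<lambda>f g h. cnj (T h f * v f) * (T h g * v g)"
  have "qform B (\<lambda>f g. \<Sum>h\<in>B. cnj (T h f) * T h g) v = (\<Sum>f\<in>B. \<Sum>g\<in>B. \<Sum>h\<in>B. ?X f g h)"
    unfolding qform_def by (intro sum.cong refl) (simp add: sum_distrib_left sum_distrib_right mult_ac)
  also have "\<dots> = (\<Sum>f\<in>B. \<Sum>h\<in>B. \<Sum>g\<in>B. ?X f g h)"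
    by (rule sum.cong[OF refl], rule sum.swap)
  also have "\<dots> = (\<Sum>h\<in>B. \<Sum>f\<in>B. \<Sum>g\<in>B. ?X f g h)"
    by (rule sum.swap)
  also have "\<dots> = (\<Sum>h\<in>B. cnj (\<Sum>f\<in>B. T h f * v f) * (\<Sum>g\<in>B. T h g * v g))"
    by (simp only: cnj_sum sum_distrib_right) (simp only: sum_distrib_left)
  also have "\<dots> = (\<Sum>h\<in>B. complex_of_real ((cmod (\<Sum>g\<in>B. T h g * v g))\<^sup>2))"
    by (intro sum.cong refl) (rule cnj_mult_self)
  finally show ?thesis by simp
qed

lemma effect_gram:
  assumes "finite B" "\<And>v. (\<Sum>h\<in>B. (cmod (\<Sum>g\<in>B. T h g * v g))\<^sup>2) \<le> (\<Sum>f\<in>B. (cmod (v f))\<^sup>2)"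
  shows "effect B (\<lambda>f g. \<Sum>h\<in>B. cnj (T h f) * T h g)"
  unfolding effect_def qform_gram[OF assms(1)]
  using assms(2) by (auto simp: sum_nonneg mult.commute)

lemma prob_one_scalar:
  assumes "\<forall>l\<in>{1..k}. qstate s (F (x l))"
  shows "prob_one k s F x (\<lambda>f g. if f = g then complex_of_real c else 0) = c"
  unfolding prob_one_def qform_scalar[OF finite_jbasis] jstate_norm[OF assms] by simp

text \<open>A basis index \<open>a < N^r\<close> of an \<open>s\<close>-qubit register is read in base \<open>N\<close> as \<open>r\<close> digits, one
per copy of the single-copy fingerprint on \<open>N\<close> basis states.\<close>
definition fingerprint_phase :: "nat \<Rightarrow> nat \<Rightarrow> (nat \<Rightarrow> bool list) \<Rightarrow> bool list \<Rightarrow> nat \<Rightarrow> complex" where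
  "fingerprint_phase N r cw u a = (\<Prod>c<r. bit_sign (gf2_inner (cw (digit N c a)) u))"

definition fingerprint :: "nat \<Rightarrow> nat \<Rightarrow> (nat \<Rightarrow> bool list) \<Rightarrow> bool list \<Rightarrow> nat \<Rightarrow> complex" where
  "fingerprint N r cw u a =
     (if a < N^r then fingerprint_phase N r cw u a / complex_of_real (sqrt (real (N^r))) else 0)"

lemma norm_fingerprint_phase [simp]: "cmod (fingerprint_phase N r cw u a) = 1"
  by (simp add: fingerprint_phase_def prod_norm[symmetric])

lemma fingerprint_phase_bxor:
  "length u = length y \<Longrightarrow>
     fingerprint_phase N r cw (bxor u y) a = fingerprint_phase N r cw u a * fingerprint_phase N r cw y a"
  unfolding fingerprint_phase_def prod.distrib[symmetric] by (intro prod.cong refl) (simp add: bit_sign_def gf2_inner_bxor)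

lemma norm_fingerprint_sq: "a < N^r \<Longrightarrow> (cmod (fingerprint N r cw u a))\<^sup>2 = 1 / real (N^r)"
  by (simp add: fingerprint_def norm_divide power_divide)

lemma qstate_fingerprint:
  assumes "N^r = 2^s"
  shows "qstate s (fingerprint N r cw u)"
proof -
  have "(\<Sum>a<(2::nat)^s. (cmod (fingerprint N r cw u a))\<^sup>2) = (\<Sum>a<(2::nat)^s. 1 / real (N^r))"
    using assms by (intro sum.cong refl) (simp add: norm_fingerprint_sq)
  also have "\<dots> = 1" using assms by simp
  finally show ?thesis unfolding qstate_def using assms by (simp add: fingerprint_def)
qed

definition swap_digits ::
    "nat \<Rightarrow> nat \<Rightarrow> nat \<Rightarrow> nat \<Rightarrow> nat set \<Rightarrow> (nat \<Rightarrow> nat) \<Rightarrow> (nat \<Rightarrow> nat)" where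
  "swap_digits N r i j \<tau> h = h(i := mix_digits N r \<tau> (h i) (h j), j := mix_digits N r \<tau> (h j) (h i))"

lemma swap_digits_in_jbasis:
  assumes "0 < N" "N^r = 2^s" "i \<in> {1..k}" "j \<in> {1..k}" "h \<in> jbasis k s"
  shows "swap_digits N r i j \<tau> h \<in> jbasis k s"
proof -
  have m: "\<And>a b. mix_digits N r \<tau> a b < 2^s" using mix_digits_less[OF assms(1)] assms(2) by metis
  show ?thesis using assms m unfolding jbasis_def swap_digits_def
    by (auto simp: PiE_iff extensional_def)
qed

lemma swap_digits_involution:
  assumes "0 < N" "N^r = 2^s" "i \<noteq> j" "h \<in> jbasis k s" "i \<in> {1..k}" "j \<in> {1..k}"
  shows "swap_digits N r i j \<tau> (swap_digits N r i j \<tau> h) = h"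
proof -
  have hi: "h i < N^r" "h j < N^r" using assms unfolding jbasis_def by (auto simp: PiE_iff)
  show ?thesis
    using assms(3) mix_digits_involution[OF assms(1) hi(1)] mix_digits_involution[OF assms(1) hi(2)]
    unfolding swap_digits_def by (auto simp: fun_eq_iff)
qed

lemma sum_jbasis_swap_digits:
  assumes "0 < N" "N^r = 2^s" "i \<noteq> j" "i \<in> {1..k}" "j \<in> {1..k}"
  shows "(\<Sum>h\<in>jbasis k s. f (swap_digits N r i j \<tau> h)) = (\<Sum>h\<in>jbasis k s. f h)"
  by (rule sum.reindex_bij_witness[of _ "swap_digits N r i j \<tau>" "swap_digits N r i j \<tau>"])
     (use assms swap_digits_in_jbasis swap_digits_involution in auto)

text \<open>\<open>2^(-r) \<Sum>_\<tau> SWAP_\<tau>\<close>, where \<open>SWAP_\<tau>\<close> exchanges the copies \<open>c \<in> \<tau>\<close> of players \<open>i\<close> and \<open>j\<close>,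
is the product over the copies of the swap-test projectors \<open>(I + SWAP_c)/2\<close>. It is applied
after the diagonal phases that turn the fingerprints of \<open>x_i\<close>, \<open>x_j\<close> into those of
\<open>x_i \<oplus> y\<close>, \<open>x_j \<oplus> z\<close>.\<close>
definition swap_test_op :: "nat \<Rightarrow> nat \<Rightarrow> (nat \<Rightarrow> bool list) \<Rightarrow> nat \<Rightarrow> nat \<Rightarrow> bool list \<Rightarrow> bool list
    \<Rightarrow> (nat \<Rightarrow> nat) \<Rightarrow> (nat \<Rightarrow> nat) \<Rightarrow> complex" where
  "swap_test_op N r cw i j y z h g = (1 / 2^r) * (\<Sum>\<tau>\<in>Pow {..<r}.
      (if g = swap_digits N r i j \<tau> h
       then fingerprint_phase N r cw y (g i) * fingerprint_phase N r cw z (g j) else 0))"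

lemma swap_test_op_apply:
  assumes "0 < N" "N^r = 2^s" "i \<in> {1..k}" "j \<in> {1..k}" "h \<in> jbasis k s"
  shows "(\<Sum>g\<in>jbasis k s. swap_test_op N r cw i j y z h g * v g) = (1 / 2^r) * (\<Sum>\<tau>\<in>Pow {..<r}.
      fingerprint_phase N r cw y (swap_digits N r i j \<tau> h i)
      * fingerprint_phase N r cw z (swap_digits N r i j \<tau> h j) * v (swap_digits N r i j \<tau> h))"
  unfolding swap_test_op_def
  using swap_digits_in_jbasis[OF assms]
  by (simp add: sum_distrib_left sum_distrib_right if_distrib if_distribR sum.delta' cong: if_cong)
     (subst sum.swap, simp add: sum.delta')

lemma card_Pow_lessThan [simp]: "card (Pow {..<(r::nat)}) = 2^r"
  by (simp add: card_Pow)

text \<open>The operator is an average of \<open>2^r\<close> unitaries (permutations of the basis composed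
with phases), so the triangle and Cauchy-Schwarz inequalities bound it by 1.\<close>
lemma swap_test_op_contraction:
  assumes "0 < N" "N^r = 2^s" "i \<noteq> j" "i \<in> {1..k}" "j \<in> {1..k}"
  shows "(\<Sum>h\<in>jbasis k s. (cmod (\<Sum>g\<in>jbasis k s. swap_test_op N r cw i j y z h g * v g))\<^sup>2)
         \<le> (\<Sum>f\<in>jbasis k s. (cmod (v f))\<^sup>2)"
proof -
  let ?B = "jbasis k s" and ?P = "Pow {..<r}"
  let ?w = "\<lambda>h \<tau>. cmod (v (swap_digits N r i j \<tau> h))"
  have pt: "(cmod (\<Sum>g\<in>?B. swap_test_op N r cw i j y z h g * v g))\<^sup>2 \<le> (1/2^r) * (\<Sum>\<tau>\<in>?P. (?w h \<tau>)\<^sup>2)"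
    if h: "h \<in> ?B" for h
  proof -
    have "cmod (\<Sum>g\<in>?B. swap_test_op N r cw i j y z h g * v g) = (1/2^r) * cmod (\<Sum>\<tau>\<in>?P.
      fingerprint_phase N r cw y (swap_digits N r i j \<tau> h i)
      * fingerprint_phase N r cw z (swap_digits N r i j \<tau> h j) * v (swap_digits N r i j \<tau> h))"
      by (simp add: swap_test_op_apply[OF assms(1,2,4,5) h] norm_mult norm_divide norm_power)
    also have "\<dots> \<le> (1/2^r) * (\<Sum>\<tau>\<in>?P. ?w h \<tau>)"
      by (intro mult_left_mono order.trans[OF norm_sum]) (auto simp: norm_mult)
    finally have 1: "cmod (\<Sum>g\<in>?B. swap_test_op N r cw i j y z h g * v g) \<le> (1/2^r) * (\<Sum>\<tau>\<in>?P. ?w h \<tau>)" .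
    have "(cmod (\<Sum>g\<in>?B. swap_test_op N r cw i j y z h g * v g))\<^sup>2 \<le> ((1/2^r) * (\<Sum>\<tau>\<in>?P. ?w h \<tau>))\<^sup>2"
      by (rule power_mono[OF 1]) simp
    also have "\<dots> = (1/2^r)^2 * (\<Sum>\<tau>\<in>?P. ?w h \<tau>)\<^sup>2" by (rule power_mult_distrib)
    also have "\<dots> \<le> (1/2^r)^2 * ((\<Sum>\<tau>\<in>?P. (?w h \<tau>)\<^sup>2) * card ?P)"
      by (intro mult_left_mono sum_squared_le_sum_of_squares) simp
    also have "\<dots> = (1/2^r) * (\<Sum>\<tau>\<in>?P. (?w h \<tau>)\<^sup>2)"
      by (simp add: power2_eq_square field_simps)
    finally show ?thesis .
  qed
  have "(\<Sum>h\<in>?B. (cmod (\<Sum>g\<in>?B. swap_test_op N r cw i j y z h g * v g))\<^sup>2) \<le> (\<Sum>h\<in>?B. (1/2^r) * (\<Sum>\<tau>\<in>?P. (?w h \<tau>)\<^sup>2))"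
    by (intro sum_mono pt)
  also have "\<dots> = (1/2^r) * (\<Sum>\<tau>\<in>?P. \<Sum>h\<in>?B. (cmod (v (swap_digits N r i j \<tau> h)))\<^sup>2)"
    by (simp add: sum_distrib_left sum.swap[of _ ?B ?P])
  also have "\<dots> = (1/2^r) * (\<Sum>\<tau>\<in>?P. \<Sum>h\<in>?B. (cmod (v h))\<^sup>2)"
    using sum_jbasis_swap_digits[OF assms, where f="\<lambda>g. (cmod (v g))\<^sup>2"] by simp
  also have "\<dots> = (\<Sum>f\<in>?B. (cmod (v f))\<^sup>2)" by simp
  finally show ?thesis .
qed

definition swap_test ::
    "nat \<Rightarrow> nat \<Rightarrow> (nat \<Rightarrow> bool list) \<Rightarrow> nat \<Rightarrow> nat \<Rightarrow> bool list \<Rightarrow> bool list \<Rightarrow> nat \<Rightarrow> nat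
     \<Rightarrow> (nat \<Rightarrow> nat) \<Rightarrow> (nat \<Rightarrow> nat) \<Rightarrow> complex" where
  "swap_test N r cw i j y z k s =
     (\<lambda>f g. \<Sum>h\<in>jbasis k s. cnj (swap_test_op N r cw i j y z h f) * swap_test_op N r cw i j y z h g)"

lemma effect_swap_test:
  assumes "0 < N" "N^r = 2^s" "i \<noteq> j" "i \<in> {1..k}" "j \<in> {1..k}"
  shows "effect (jbasis k s) (swap_test N r cw i j y z k s)"
  unfolding swap_test_def by (rule effect_gram[OF finite_jbasis swap_test_op_contraction[OF assms]])

lemma prob_one_swap_test_eq_norm:
  "prob_one k s F x (swap_test N r cw i j y z k s) =
     (\<Sum>h\<in>jbasis k s. (cmod (\<Sum>g\<in>jbasis k s. swap_test_op N r cw i j y z h g * jstate k F x g))\<^sup>2)"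
  unfolding prob_one_def swap_test_def qform_gram[OF finite_jbasis] by simp

lemma sum_Pow_prod_if:
  fixes X Y :: "'a \<Rightarrow> 'b::comm_semiring_1"
  assumes "finite A"
  shows "(\<Sum>\<tau>\<in>Pow A. \<Prod>c\<in>A. (if c \<in> \<tau> then X c else Y c)) = (\<Prod>c\<in>A. X c + Y c)"
proof -
  have "(\<Prod>c\<in>A. (if c \<in> \<tau> then X c else Y c)) = (\<Prod>c\<in>\<tau>. X c) * (\<Prod>c\<in>A-\<tau>. Y c)" if "\<tau> \<in> Pow A" for \<tau>
  proof -
    have "A \<inter> {c. c \<in> \<tau>} = \<tau>" "A \<inter> - {c. c \<in> \<tau>} = A - \<tau>" using that by auto
    then show ?thesis using assms by (simp add: prod.If_cases)
  qed
  then show ?thesis using prod_add[OF assms, of X Y] by simp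
qed

lemma prod_remove_pair:
  fixes f :: "'a \<Rightarrow> 'b::comm_monoid_mult"
  assumes "finite A" "i \<in> A" "j \<in> A" "i \<noteq> j"
  shows "(\<Prod>l\<in>A. f l) = f i * f j * (\<Prod>l\<in>A-{i,j}. f l)"
proof -
  have "(\<Prod>l\<in>A. f l) = f i * (\<Prod>l\<in>A-{i}. f l)" using assms by (intro prod.remove) auto
  also have "(\<Prod>l\<in>A-{i}. f l) = f j * (\<Prod>l\<in>A-{i}-{j}. f l)" using assms by (intro prod.remove) auto
  also have "A-{i}-{j} = A-{i,j}" by auto
  finally show ?thesis by (simp add: mult.assoc)
qed

lemma jstate_fingerprint:
  assumes "N^r = 2^s" "g \<in> jbasis k s"
  shows "jstate k (fingerprint N r cw) x g
    = (1 / complex_of_real (sqrt (real (N^r))))^k * (\<Prod>l\<in>{1..k}. fingerprint_phase N r cw (x l) (g l))"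
proof -
  let ?\<kappa> = "1 / complex_of_real (sqrt (real (N^r)))"
  have "jstate k (fingerprint N r cw) x g = (\<Prod>l\<in>{1..k}. ?\<kappa> * fingerprint_phase N r cw (x l) (g l))"
    unfolding jstate_def using assms
    by (intro prod.cong refl) (auto simp: jbasis_def fingerprint_def PiE_iff)
  also have "\<dots> = ?\<kappa>^k * (\<Prod>l\<in>{1..k}. fingerprint_phase N r cw (x l) (g l))"
    by (simp only: prod.distrib prod_constant) simp
  finally show ?thesis .
qed

lemma fingerprint_phase_mix_digits:
  assumes "0 < N"
  shows "fingerprint_phase N r cw w (mix_digits N r \<tau> a b) * fingerprint_phase N r cw w' (mix_digits N r \<tau> b a) =
    (\<Prod>c<r. if c \<in> \<tau>
      then bit_sign (gf2_inner (cw (digit N c b)) w) * bit_sign (gf2_inner (cw (digit N c a)) w')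
      else bit_sign (gf2_inner (cw (digit N c a)) w) * bit_sign (gf2_inner (cw (digit N c b)) w'))"
  unfolding fingerprint_phase_def prod.distrib[symmetric]
  by (intro prod.cong refl) (simp add: digit_mix_digits[OF assms])

text \<open>The swaps leave the registers of the other players untouched, and on the registers of
\<open>i\<close> and \<open>j\<close> the phases factor over the copies, so the sum over \<open>\<tau> \<subseteq> [r]\<close> becomes a product
over the copies.\<close>
lemma swap_test_op_apply_fingerprint:
  assumes Npos: "0 < N" and Nrs: "N^r = 2^s" and ij: "i \<noteq> j" "i \<in> {1..k}" "j \<in> {1..k}"
    and h: "h \<in> jbasis k s" and len: "length (x i) = length y" "length (x j) = length z"
  defines "w \<equiv> bxor (x i) y" and "w' \<equiv> bxor (x j) z"
  shows "(\<Sum>g\<in>jbasis k s. swap_test_op N r cw i j y z h g * jstate k (fingerprint N r cw) x g)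
    = (1/2^r) * (1 / complex_of_real (sqrt (real (N^r))))^k
      * (\<Prod>l\<in>{1..k}-{i,j}. fingerprint_phase N r cw (x l) (h l))
      * (\<Prod>c<r. bit_sign (gf2_inner (cw (digit N c (h j))) w) * bit_sign (gf2_inner (cw (digit N c (h i))) w')
              + bit_sign (gf2_inner (cw (digit N c (h i))) w) * bit_sign (gf2_inner (cw (digit N c (h j))) w'))"
proof -
  let ?\<kappa> = "1 / complex_of_real (sqrt (real (N^r)))"
  define R where "R = (\<Prod>l\<in>{1..k}-{i,j}. fingerprint_phase N r cw (x l) (h l))"
  define X where "X c = bit_sign (gf2_inner (cw (digit N c (h j))) w) * bit_sign (gf2_inner (cw (digit N c (h i))) w')" for c
  define Y where "Y c = bit_sign (gf2_inner (cw (digit N c (h i))) w) * bit_sign (gf2_inner (cw (digit N c (h j))) w')" for c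
  have summand: "fingerprint_phase N r cw y (swap_digits N r i j \<tau> h i)
      * fingerprint_phase N r cw z (swap_digits N r i j \<tau> h j)
      * jstate k (fingerprint N r cw) x (swap_digits N r i j \<tau> h)
    = ?\<kappa>^k * R * (\<Prod>c<r. if c \<in> \<tau> then X c else Y c)" for \<tau>
  proof -
    let ?g = "swap_digits N r i j \<tau> h"
    let ?\<phi> = "fingerprint_phase N r cw"
    have rest: "(\<Prod>l\<in>{1..k}-{i,j}. ?\<phi> (x l) (?g l)) = R"
      unfolding R_def swap_digits_def by (intro prod.cong refl) auto
    have gij: "?g i = mix_digits N r \<tau> (h i) (h j)" "?g j = mix_digits N r \<tau> (h j) (h i)"
      using ij(1) unfolding swap_digits_def by auto
    have "?\<phi> y (?g i) * ?\<phi> z (?g j) * jstate k (fingerprint N r cw) x ?g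
      = ?\<kappa>^k * R * ((?\<phi> (x i) (?g i) * ?\<phi> y (?g i)) * (?\<phi> (x j) (?g j) * ?\<phi> z (?g j)))"
      unfolding jstate_fingerprint[OF Nrs swap_digits_in_jbasis[OF Npos Nrs ij(2,3) h]]
        prod_remove_pair[OF finite_atLeastAtMost ij(2,3,1), of "\<lambda>l. ?\<phi> (x l) (?g l)"] rest
      by (simp add: mult_ac)
    also have "\<dots> = ?\<kappa>^k * R * (?\<phi> w (?g i) * ?\<phi> w' (?g j))"
      unfolding w_def w'_def using len by (simp add: fingerprint_phase_bxor)
    also have "\<dots> = ?\<kappa>^k * R * (\<Prod>c<r. if c \<in> \<tau> then X c else Y c)"
      unfolding gij fingerprint_phase_mix_digits[OF Npos] X_def Y_def by simp
    finally show ?thesis .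
  qed
  have "(\<Sum>g\<in>jbasis k s. swap_test_op N r cw i j y z h g * jstate k (fingerprint N r cw) x g)
      = (1/2^r) * (\<Sum>\<tau>\<in>Pow {..<r}. ?\<kappa>^k * R * (\<Prod>c<r. if c \<in> \<tau> then X c else Y c))"
    unfolding swap_test_op_apply[OF Npos Nrs ij(2,3) h] summand ..
  also have "\<dots> = (1/2^r) * ?\<kappa>^k * R * (\<Prod>c<r. X c + Y c)"
    by (simp add: sum_distrib_left[symmetric] sum_Pow_prod_if mult.assoc)
  finally show ?thesis unfolding R_def X_def Y_def .
qed

lemma norm_swap_test_op_apply_fingerprint_sq:
  assumes Npos: "0 < N" and Nrs: "N^r = 2^s" and ij: "i \<noteq> j" "i \<in> {1..k}" "j \<in> {1..k}"
    and h: "h \<in> jbasis k s"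
    and len: "length (x i) = n" "length (x j) = n" "length y = n" "length z = n"
  shows "(cmod (\<Sum>g\<in>jbasis k s. swap_test_op N r cw i j y z h g * jstate k (fingerprint N r cw) x g))\<^sup>2
     = (1 / real (N^r))^k
       * (\<Prod>c<r. agree cw (bxor (bxor (x i) y) (bxor (x j) z)) (digit N c (h i)) (digit N c (h j)))"
proof -
  define w where "w = bxor (x i) y"
  define w' where "w' = bxor (x j) z"
  let ?\<kappa> = "1 / complex_of_real (sqrt (real (N^r)))"
  let ?R = "\<Prod>l\<in>{1..k}-{i,j}. fingerprint_phase N r cw (x l) (h l)"
  let ?XY = "\<Prod>c<r. bit_sign (gf2_inner (cw (digit N c (h j))) w) * bit_sign (gf2_inner (cw (digit N c (h i))) w')
              + bit_sign (gf2_inner (cw (digit N c (h i))) w) * bit_sign (gf2_inner (cw (digit N c (h j))) w')"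
  let ?A = "\<Prod>c<r. agree cw (bxor w w') (digit N c (h i)) (digit N c (h j))"
  have li: "length (x i) = length y" "length (x j) = length z" using len by simp_all
  have "length w = length w'" using len unfolding w_def w'_def by simp
  then have XY: "(cmod ?XY)\<^sup>2 = 4^r * ?A"
    unfolding prod_norm[symmetric] prod_power_distrib
    by (simp add: norm_bit_sign_swap_sq prod.distrib)
  have R: "cmod ?R = 1" by (simp add: prod_norm[symmetric])
  have "(cmod ?\<kappa>)\<^sup>2 = 1 / real (N^r)" by (simp add: norm_divide power_divide)
  then have \<kappa>: "(cmod (?\<kappa>^k))\<^sup>2 = (1 / real (N^r))^k" by (metis norm_power power_mult mult.commute)
  have two: "(cmod (1/2^r :: complex))\<^sup>2 * 4^r = 1"
    by (simp add: norm_divide norm_power power2_eq_square flip: power_mult_distrib)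
  have "(cmod (\<Sum>g\<in>jbasis k s. swap_test_op N r cw i j y z h g * jstate k (fingerprint N r cw) x g))\<^sup>2
     = (cmod (1/2^r :: complex))\<^sup>2 * (cmod (?\<kappa>^k))\<^sup>2 * (cmod ?R)\<^sup>2 * (cmod ?XY)\<^sup>2"
    unfolding swap_test_op_apply_fingerprint[OF assms(1-6) li] w_def w'_def
    by (simp only: norm_mult power_mult_distrib)
  also have "\<dots> = ((cmod (1/2^r :: complex))\<^sup>2 * 4^r) * ((1 / real (N^r))^k * ?A)"
    unfolding XY R \<kappa> by (simp only: mult_ac) simp
  finally show ?thesis unfolding two w_def w'_def by simp
qed

lemma inverse_pow_mult_pow_diff_two:
  assumes "2 \<le> k" "0 < (M::real)"
  shows "(1 / M)^k * M^(k-2) = 1 / M^2"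
proof -
  have "k = (k-2) + 2" using assms(1) by simp
  then have "(1 / M)^k = (1 / M)^(k-2) * (1 / M)^2" by (metis power_add)
  then show ?thesis using assms(2) by (simp add: power_divide field_simps)
qed

lemma prob_one_swap_test:
  assumes Npos: "0 < N" and Nrs: "N^r = 2^s" and ij: "i \<noteq> j" "i \<in> {1..k}" "j \<in> {1..k}"
    and len: "length (x i) = n" "length (x j) = n" "length y = n" "length z = n"
  shows "prob_one k s (fingerprint N r cw) x (swap_test N r cw i j y z k s) =
     ((\<Sum>m<N. \<Sum>m'<N. agree cw (bxor (bxor (x i) y) (bxor (x j) z)) m m') / (real N)^2)^r"
proof -
  define d where "d = bxor (bxor (x i) y) (bxor (x j) z)"
  define A where "A = (\<Sum>m<N. \<Sum>m'<N. agree cw d m m')"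
  let ?H = "\<lambda>a b. \<Prod>c<r. agree cw d (digit N c a) (digit N c b)"
  have k2: "2 \<le> k" using ij by auto
  have "prob_one k s (fingerprint N r cw) x (swap_test N r cw i j y z k s)
      = (\<Sum>h\<in>PiE {1..k} (\<lambda>_. {..<2^s}). (1 / real (N^r))^k * ?H (h i) (h j))"
    unfolding prob_one_swap_test_eq_norm d_def jbasis_def[symmetric]
    using norm_swap_test_op_apply_fingerprint_sq[OF Npos Nrs ij _ len] by (intro sum.cong refl) auto
  also have "\<dots> = (1 / real (N^r))^k * (\<Sum>h\<in>PiE {1..k} (\<lambda>_. {..<N^r}). ?H (h i) (h j))"
    unfolding Nrs by (simp add: sum_distrib_left)
  also have "\<dots> = (1 / real (N^r))^k * (real (N^r)^(k-2) * (\<Sum>a<N^r. \<Sum>b<N^r. ?H a b))"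
    using ij by (subst sum_PiE_pair) auto
  also have "\<dots> = A^r / real (N^r)^2"
    unfolding sum_sum_prod_digits[OF Npos] A_def mult.assoc[symmetric]
    using inverse_pow_mult_pow_diff_two[OF k2] Npos by simp
  also have "\<dots> = (A / (real N)^2)^r"
    by (simp add: power_divide flip: power_mult) (simp add: mult.commute)
  finally show ?thesis unfolding A_def d_def .
qed

lemma referee_computes_guess:
  assumes "\<forall>u. length u = n \<longrightarrow> qstate s (F u)" "1/2 \<le> \<epsilon>"
  shows "referee_computes k n s F \<epsilon> i j y z"
proof -
  have prob: "prob_one k s F x (\<lambda>f g. if f = g then complex_of_real (1/2) else 0) = 1/2"
    if "\<forall>l\<in>{1..k}. length (x l) = n" for x
    using that assms(1) by (intro prob_one_scalar) auto
  show ?thesis unfolding referee_computes_def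
    by (intro exI[of _ "\<lambda>f g. if f = g then complex_of_real (1/2) else 0"] conjI effect_scalar)
       (use assms(2) in \<open>auto simp: prob\<close>)
qed

lemma referee_computes_same_player:
  assumes qs: "\<forall>u. length u = n \<longrightarrow> qstate s (F u)" and "0 \<le> \<epsilon>"
    and "i \<in> {1..k}" "length y = n" "length z = n"
  shows "referee_computes k n s F \<epsilon> i i y z"
proof -
  define answer where "answer = (if y = z then 1 else 0 :: real)"
  have meq: "MEQ x i i y z \<longleftrightarrow> y = z" if "\<forall>l\<in>{1..k}. length (x l) = n" for x
    using that assms bxor_left_cancel[of "x i" y z] unfolding MEQ_def by auto
  have prob: "prob_one k s F x (\<lambda>f g. if f = g then complex_of_real answer else 0) = answer"
    if "\<forall>l\<in>{1..k}. length (x l) = n" for x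
    using that qs by (intro prob_one_scalar) auto
  show ?thesis unfolding referee_computes_def
    by (intro exI[of _ "\<lambda>f g. if f = g then complex_of_real answer else 0"] conjI effect_scalar)
       (use assms(2) in \<open>auto simp: prob meq answer_def\<close>)
qed

lemma referee_computes_swap_test:
  assumes NL: "N = 4*L" and Nrs: "N^r = 2^s" and "0 < L" and code: "balanced_code n L cw"
    and eps: "(5/8)^r \<le> \<epsilon>" and ij: "i \<noteq> j" "i \<in> {1..k}" "j \<in> {1..k}"
    and yz: "length y = n" "length z = n"
  shows "referee_computes k n s (fingerprint N r cw) \<epsilon> i j y z"
  unfolding referee_computes_def
proof (intro exI[of _ "swap_test N r cw i j y z k s"] conjI allI impI)
  have Npos: "0 < N" using NL \<open>0 < L\<close> by simp
  show "effect (jbasis k s) (swap_test N r cw i j y z k s)"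
    by (rule effect_swap_test[OF Npos Nrs ij])
  fix x :: "nat \<Rightarrow> bool list" assume xl: "\<forall>l\<in>{1..k}. length (x l) = n"
  define d where "d = bxor (bxor (x i) y) (bxor (x j) z)"
  have pf: "prob_one k s (fingerprint N r cw) x (swap_test N r cw i j y z k s) =
     ((\<Sum>m<N. \<Sum>m'<N. agree cw d m m') / (real N)^2)^r"
    unfolding d_def using xl ij by (intro prob_one_swap_test[OF Npos Nrs ij _ _ yz]) auto
  have l1: "length (bxor (x i) y) = n" "length (bxor (x j) z) = n" using xl ij yz by auto
  have d_zero: "d = replicate n False \<longleftrightarrow> MEQ x i j y z"
    unfolding d_def MEQ_def by (rule bxor_eq_replicate_False_iff[OF l1])
  show "if MEQ x i j y z then 1 - \<epsilon> \<le> prob_one k s (fingerprint N r cw) x (swap_test N r cw i j y z k s)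
        else 1 - \<epsilon> \<le> 1 - prob_one k s (fingerprint N r cw) x (swap_test N r cw i j y z k s)"
  proof (cases "MEQ x i j y z")
    case True
    then have "d = replicate n False" using d_zero by simp
    then have "prob_one k s (fingerprint N r cw) x (swap_test N r cw i j y z k s) = 1"
      unfolding pf using Npos by (simp only: agree_sum_replicate_False) simp
    then show ?thesis using True order_trans[OF _ eps] by simp
  next
    case False
    then have "balanced_at L cw d" using code d_zero l1 unfolding balanced_code_def d_def by simp
    then have "(\<Sum>m<N. \<Sum>m'<N. agree cw d m m') / (real N)^2 \<le> 5/8"
      unfolding NL by (rule agree_sum_le_of_balanced)
    then have "prob_one k s (fingerprint N r cw) x (swap_test N r cw i j y z k s) \<le> (5/8)^r"
      unfolding pf by (intro power_mono divide_nonneg_nonneg sum_nonneg) (auto simp: agree_def)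
    then show ?thesis using False eps by simp
  qed
qed

definition meq_scheme :: "nat \<Rightarrow> nat \<Rightarrow> real \<Rightarrow> nat \<Rightarrow> (bool list \<Rightarrow> nat \<Rightarrow> complex) \<Rightarrow> bool" where
  "meq_scheme k n \<epsilon> s F \<longleftrightarrow> (\<forall>u. length u = n \<longrightarrow> qstate s (F u)) \<and>
     (\<forall>i\<in>{1..k}. \<forall>j\<in>{1..k}. \<forall>y z. length y = n \<longrightarrow> length z = n \<longrightarrow>
        referee_computes k n s F \<epsilon> i j y z)"

lemma meq_scheme_guess: "1/2 \<le> \<epsilon> \<Longrightarrow> meq_scheme k n \<epsilon> 0 (fingerprint 1 0 cw)"
  unfolding meq_scheme_def using qstate_fingerprint[of 1 0 0] referee_computes_guess by auto

lemma meq_scheme_fingerprint: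
  assumes "(4*L)^r = 2^s" "0 < L" "balanced_code n L cw" "(5/8)^r \<le> \<epsilon>" "0 < \<epsilon>"
  shows "meq_scheme k n \<epsilon> s (fingerprint (4*L) r cw)"
  unfolding meq_scheme_def
proof (intro conjI allI impI ballI)
  show "qstate s (fingerprint (4*L) r cw u)" for u by (rule qstate_fingerprint[OF assms(1)])
  fix i j and y z :: "bool list" assume ij: "i \<in> {1..k}" "j \<in> {1..k}" and yz: "length y = n" "length z = n"
  show "referee_computes k n s (fingerprint (4*L) r cw) \<epsilon> i j y z"
  proof (cases "i = j")
    case True
    then show ?thesis using assms(5) ij yz qstate_fingerprint[OF assms(1)]
      by (auto intro: referee_computes_same_player)
  next
    case False
    show ?thesis by (rule referee_computes_swap_test[OF refl assms(1-4) False ij yz])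
  qed
qed

lemma real_le_two_pow_nat_ceiling_log:
  assumes "1 \<le> x"
  shows "x \<le> real (2 ^ nat \<lceil>log 2 x\<rceil>)"
proof -
  have "log 2 x \<le> real (nat \<lceil>log 2 x\<rceil>)" using assms by simp
  then have "2 powr log 2 x \<le> 2 powr real (nat \<lceil>log 2 x\<rceil>)" by (intro powr_mono) auto
  moreover have "(2::real) powr real (nat \<lceil>log 2 x\<rceil>) = 2 ^ (nat \<lceil>log 2 x\<rceil>)"
    by (rule powr_realpow) simp
  ultimately show ?thesis using assms by simp
qed

lemma nat_ceiling_log_le:
  assumes "1 \<le> x" shows "real (nat \<lceil>log 2 x\<rceil>) \<le> log 2 x + 1"
proof -
  have "real (nat \<lceil>log 2 x\<rceil>) = real_of_int \<lceil>log 2 x\<rceil>" using assms by simp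
  then show ?thesis using of_int_ceiling_le_add_one by simp
qed

text \<open>With \<open>L = 2^(\<lceil>log n\<rceil> + 1)\<close> and \<open>r = 2\<lceil>log 1/\<epsilon>\<rceil>\<close>, each copy has \<open>log 4L \<le> 5 log n\<close>
qubits and \<open>(5/8)^2 \<le> 1/2\<close>; the constant absorbs \<open>20/(ln 2)^2 \<le> 80\<close>.\<close>
lemma fingerprint_parameters:
  assumes n2: "2 \<le> n" and e0: "0 < \<epsilon>" and eh: "\<epsilon> < 1/2"
  obtains L r s where "2*n \<le> L" "(4*L)^r = 2^s" "(5/8::real)^r \<le> \<epsilon>"
    "real s \<le> 100 * ln (real n) * ln (1 / \<epsilon>)"
proof
  define a where "a = nat \<lceil>log 2 (real n)\<rceil>"
  define b where "b = nat \<lceil>log 2 (1/\<epsilon>)\<rceil>"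
  have n1: "1 \<le> real n" using n2 by simp
  have ie: "1 \<le> 1/\<epsilon>" using e0 eh by simp
  have "real n \<le> real (2^a)" unfolding a_def by (rule real_le_two_pow_nat_ceiling_log[OF n1])
  then show "2*n \<le> 2^(a+1)" by simp
  have "(4::nat) * 2^(a+1) = 2^(a+3)" by (simp add: power_add)
  then show "(4 * 2^(a+1))^(2*b) = (2::nat)^((a+3) * (2*b))" by (simp only: power_mult)
  have "(5/8::real)^(2*b) = (25/64)^b" by (simp add: power_mult power2_eq_square)
  also have "\<dots> \<le> (1/2)^b" by (intro power_mono) auto
  also have "\<dots> \<le> \<epsilon>"
  proof -
    have "1/\<epsilon> \<le> real (2^b)" unfolding b_def by (rule real_le_two_pow_nat_ceiling_log[OF ie])
    then show ?thesis using e0 by (simp add: power_one_over field_simps)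
  qed
  finally show "(5/8::real)^(2*b) \<le> \<epsilon>" .
  let ?x = "log 2 (real n)" and ?y = "log 2 (1/\<epsilon>)"
  have lnn: "0 \<le> ln (real n)" and lne: "0 < ln (1/\<epsilon>)" using n2 e0 eh by simp_all
  have x1: "1 \<le> ?x" using n2 by simp
  have y1: "1 \<le> ?y" using eh e0 by (simp add: field_simps)
  have "real a \<le> ?x + 1" unfolding a_def by (rule nat_ceiling_log_le[OF n1])
  then have ta: "real (a+3) \<le> 5 * ?x" using x1 by simp
  have "real b \<le> ?y + 1" unfolding b_def by (rule nat_ceiling_log_le[OF ie])
  then have rb: "real (2*b) \<le> 4 * ?y" using y1 by simp
  have "real ((a+3) * (2*b)) \<le> (5 * ?x) * (4 * ?y)"
    unfolding of_nat_mult[of "a+3"] by (rule mult_mono[OF ta rb]) (use x1 in auto)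
  also have "\<dots> = 20 * (ln (real n) * ln (1/\<epsilon>)) / (ln 2)^2"
    by (simp add: log_def power2_eq_square)
  also have "\<dots> \<le> 20 * (ln (real n) * ln (1/\<epsilon>)) / (1/4)"
  proof (rule divide_left_mono)
    have "(1/2)^2 \<le> (ln (2::real))^2" using ln2_ge_two_thirds by (intro power_mono) auto
    then show "1/4 \<le> (ln (2::real))^2" by (simp add: power2_eq_square)
  qed (use lnn lne in auto)
  also have "\<dots> \<le> 100 * ln (real n) * ln (1 / \<epsilon>)" using lnn lne by simp
  finally show "real ((a+3) * (2*b)) \<le> 100 * ln (real n) * ln (1 / \<epsilon>)" .
qed

theorem lemma1:
  shows "\<exists>C::real. C > 0 \<and>
    (\<forall>n k::nat. \<forall>\<epsilon>::real. n \<ge> 2 \<longrightarrow> k \<ge> 2 \<longrightarrow> 0 < \<epsilon> \<longrightarrow> \<epsilon> < 1 \<longrightarrow>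
      (\<exists>s::nat. \<exists>F :: bool list \<Rightarrow> nat \<Rightarrow> complex.
         real s \<le> C * ln (real n) * ln (1 / \<epsilon>) \<and>
         (\<forall>u. length u = n \<longrightarrow> qstate s (F u)) \<and>
         (\<forall>i\<in>{1..k}. \<forall>j\<in>{1..k}. \<forall>y z. length y = n \<longrightarrow> length z = n \<longrightarrow>
            referee_computes k n s F \<epsilon> i j y z)))"
proof (intro exI[of _ "100::real"] conjI allI impI)
  show "(0::real) < 100" by simp
  fix n k :: nat and \<epsilon> :: real
  assume n2: "2 \<le> n" and "2 \<le> k" and e0: "0 < \<epsilon>" and e1: "\<epsilon> < 1"
  have "\<exists>s F. real s \<le> 100 * ln (real n) * ln (1 / \<epsilon>) \<and> meq_scheme k n \<epsilon> s F"
  proof (cases "1/2 \<le> \<epsilon>")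
    case True
    have "0 \<le> ln (real n) * ln (1 / \<epsilon>)" using n2 e0 e1 by simp
    then show ?thesis using meq_scheme_guess[OF True, of k n "\<lambda>_. []"]
      by (intro exI[of _ 0] exI[of _ "fingerprint 1 0 (\<lambda>_. [])"]) auto
  next
    case False
    then obtain L r s where L: "2*n \<le> L" and rs: "(4*L)^r = 2^s" "(5/8::real)^r \<le> \<epsilon>"
      and s: "real s \<le> 100 * ln (real n) * ln (1 / \<epsilon>)"
      using fingerprint_parameters[OF n2 e0] by (metis not_le)
    obtain cw where "balanced_code n L cw" using balanced_code_exists[OF L] ..
    then show ?thesis using meq_scheme_fingerprint[OF rs(1) _ _ rs(2) e0] L n2 s by fastforce
  qed
  then show "\<exists>s F. real s \<le> 100 * ln (real n) * ln (1 / \<epsilon>) \<and>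
         (\<forall>u. length u = n \<longrightarrow> qstate s (F u)) \<and>
         (\<forall>i\<in>{1..k}. \<forall>j\<in>{1..k}. \<forall>y z. length y = n \<longrightarrow> length z = n \<longrightarrow>
            referee_computes k n s F \<epsilon> i j y z)"
    unfolding meq_scheme_def .
qed

end
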